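(* In the setting below, the image of $\bar\rho\colon\bar G\to\bar A$ is a normal subgroup of $\bar A$.
   Context: Let $G$ be a group generated by $a_1,\dots,a_n$ with $z=a_1\cdots a_n$ central. Let $S_1,\dots,S_m\subseteq\{1,\dots,n\}$ with $|S_i\cap S_r|\le1$ for $i\neq r$. For $S\subseteq\{1,\dots,n\}$ let $G_S$ be the quotient of $G$ by the normal closure of $\{a_j:j\notin S\}$; let $a_{ij}$ be the image of $a_j$ in $G_{S_i}$ and $z_i=a_{i1}\cdots a_{in}$ (central in $G_{S_i}$). Let $\bar G=G/\langle z\rangle$, $\bar G_{S_i}=G_{S_i}/\langle z_i\rangle$, and assume each $\bar G_{S_i}$ is free of rank $|S_i|-1$, the images of any $|S_i|-1$ of the $a_{ij}$, $j\in S_i$, forming a free basis. Let $\bar A=\prod_{i=1}^m\bar G_{S_i}$ and $\bar\rho\colon\bar G\to\bar A$ the homomorphism induced by the product of the projections $G\to G_{S_i}$. *)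

theory Defs
  imports "HOL-Algebra.Algebra"
begin

definition mprod :: "('a, 'b) monoid_scheme \<Rightarrow> 'a list \<Rightarrow> 'a" where
  "mprod G xs = foldr (\<lambda>x y. x \<otimes>\<^bsub>G\<^esub> y) xs \<one>\<^bsub>G\<^esub>"

definition nclosure :: "('a, 'b) monoid_scheme \<Rightarrow> 'a set \<Rightarrow> 'a set" where
  "nclosure G Y = generate G (\<Union>g\<in>carrier G. (\<lambda>x. g \<otimes>\<^bsub>G\<^esub> x \<otimes>\<^bsub>G\<^esub> m_inv G g) ` Y)"

definition word_eval :: "('a, 'b) monoid_scheme \<Rightarrow> ('i \<Rightarrow> 'a) \<Rightarrow> ('i \<times> bool) list \<Rightarrow> 'a" where
  "word_eval H b w = foldr (\<lambda>(i, e) y. (if e then b i else m_inv H (b i)) \<otimes>\<^bsub>H\<^esub> y) w \<one>\<^bsub>H\<^esub>"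

definition reduced_word :: "('i \<times> bool) list \<Rightarrow> bool" where
  "reduced_word w \<longleftrightarrow> (\<forall>k. Suc k < length w \<longrightarrow>
      \<not> (fst (w ! k) = fst (w ! Suc k) \<and> snd (w ! k) \<noteq> snd (w ! Suc k)))"

definition free_basis :: "('a, 'b) monoid_scheme \<Rightarrow> 'i set \<Rightarrow> ('i \<Rightarrow> 'a) \<Rightarrow> bool" where
  "free_basis H I b \<longleftrightarrow> b ` I \<subseteq> carrier H \<and> generate H (b ` I) = carrier H \<and>
     (\<forall>w. set (map fst w) \<subseteq> I \<longrightarrow> reduced_word w \<longrightarrow> w \<noteq> [] \<longrightarrow> word_eval H b w \<noteq> \<one>\<^bsub>H\<^esub>)"

definition NS :: "('a, 'b) monoid_scheme \<Rightarrow> (nat \<Rightarrow> 'a) \<Rightarrow> nat \<Rightarrow> nat set \<Rightarrow> 'a set" where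
  "NS G a n S = nclosure G (a ` ({1..n} - S))"

definition GS :: "('a, 'b) monoid_scheme \<Rightarrow> (nat \<Rightarrow> 'a) \<Rightarrow> nat \<Rightarrow> nat set \<Rightarrow> 'a set monoid" where
  "GS G a n S = G Mod NS G a n S"

definition projS :: "('a, 'b) monoid_scheme \<Rightarrow> (nat \<Rightarrow> 'a) \<Rightarrow> nat \<Rightarrow> nat set \<Rightarrow> 'a \<Rightarrow> 'a set" where
  "projS G a n S g = NS G a n S #>\<^bsub>G\<^esub> g"

definition zS :: "('a, 'b) monoid_scheme \<Rightarrow> (nat \<Rightarrow> 'a) \<Rightarrow> nat \<Rightarrow> nat set \<Rightarrow> 'a set" where
  "zS G a n S = mprod (GS G a n S) (map (\<lambda>j. projS G a n S (a j)) [1..<Suc n])"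

definition GbarS :: "('a, 'b) monoid_scheme \<Rightarrow> (nat \<Rightarrow> 'a) \<Rightarrow> nat \<Rightarrow> nat set \<Rightarrow> 'a set set monoid" where
  "GbarS G a n S = GS G a n S Mod generate (GS G a n S) {zS G a n S}"

definition projbarS :: "('a, 'b) monoid_scheme \<Rightarrow> (nat \<Rightarrow> 'a) \<Rightarrow> nat \<Rightarrow> nat set \<Rightarrow> 'a \<Rightarrow> 'a set set" where
  "projbarS G a n S g = generate (GS G a n S) {zS G a n S} #>\<^bsub>GS G a n S\<^esub> projS G a n S g"

definition zG :: "('a, 'b) monoid_scheme \<Rightarrow> (nat \<Rightarrow> 'a) \<Rightarrow> nat \<Rightarrow> 'a" where
  "zG G a n = mprod G (map a [1..<Suc n])"

definition Gbar :: "('a, 'b) monoid_scheme \<Rightarrow> (nat \<Rightarrow> 'a) \<Rightarrow> nat \<Rightarrow> 'a set monoid" where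
  "Gbar G a n = G Mod generate G {zG G a n}"

definition Abar :: "('a, 'b) monoid_scheme \<Rightarrow> (nat \<Rightarrow> 'a) \<Rightarrow> nat \<Rightarrow> (nat \<Rightarrow> nat set) \<Rightarrow> nat
    \<Rightarrow> (nat \<Rightarrow> 'a set set) monoid" where
  "Abar G a n Ss m = product_group {1..m} (\<lambda>i. GbarS G a n (Ss i))"

definition rhobar :: "('a, 'b) monoid_scheme \<Rightarrow> (nat \<Rightarrow> 'a) \<Rightarrow> nat \<Rightarrow> (nat \<Rightarrow> nat set) \<Rightarrow> nat
    \<Rightarrow> 'a set \<Rightarrow> (nat \<Rightarrow> 'a set set)" where
  "rhobar G a n Ss m C = (\<lambda>i\<in>{1..m}. projbarS G a n (Ss i) (SOME g. g \<in> C))"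

end

theory Submission
  imports Defs
begin

text \<open>Write \<open>\<pi>\<^sub>i\<close> for the projection of \<open>G\<close> onto \<open>G\<^sub>S\<^sub>i/\<langle>z\<^sub>i\<rangle>\<close>; the image of \<open>\<rho>\<close> is
  the image of \<open>g \<mapsto> (\<pi>\<^sub>i g)\<^sub>i\<close>. Since \<open>u g u\<^sup>-\<^sup>1 = g [g\<^sup>-\<^sup>1, u]\<close>, normality follows, one
  coordinate at a time, once every commutator \<open>[x, y]\<close> can be replaced by some \<open>d\<close> with
  \<open>\<pi>\<^sub>i d = \<pi>\<^sub>i [x, y]\<close> and \<open>\<pi>\<^sub>r d = 1\<close> for all \<open>r \<noteq> i\<close>. For two generators \<open>a\<^sub>j, a\<^sub>k\<close>
  this is automatic: \<open>a\<^sub>j\<close> dies under \<open>\<pi>\<^sub>r\<close> unless \<open>j \<in> S\<^sub>r\<close>, and distinct \<open>j, k\<close> lie in at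
  most one common \<open>S\<^sub>r\<close>, so \<open>[a\<^sub>j, a\<^sub>k]\<close> dies either under \<open>\<pi>\<^sub>i\<close> or under all other \<open>\<pi>\<^sub>r\<close>.
  It extends to all commutators because, with \<open>K\<close> the intersection of the kernels of the
  \<open>\<pi>\<^sub>r\<close>, \<open>r \<noteq> i\<close>, the subgroup \<open>\<pi>\<^sub>i K\<close> is normal and the images of the generators
  commute modulo it.\<close>

section \<open>Normal closures and quotient maps\<close>

lemma (in group) nclosure_normal:
  assumes Y: "Y \<subseteq> carrier G"
  shows "nclosure G Y \<lhd> G"
  unfolding nclosure_def
proof (rule normal_generateI)
  show "(\<Union>g\<in>carrier G. (\<lambda>x. g \<otimes> x \<otimes> inv g) ` Y) \<subseteq> carrier G" using Y by auto
  fix h g assume "h \<in> (\<Union>g\<in>carrier G. (\<lambda>x. g \<otimes> x \<otimes> inv g) ` Y)" and g: "g \<in> carrier G"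
  then obtain g0 y where g0: "g0 \<in> carrier G" "y \<in> Y" "h = g0 \<otimes> y \<otimes> inv g0" by auto
  then have "g \<otimes> h \<otimes> inv g = (g \<otimes> g0) \<otimes> y \<otimes> inv (g \<otimes> g0)"
    using g Y by (auto simp: m_assoc inv_mult_group)
  then show "g \<otimes> h \<otimes> inv g \<in> (\<Union>g\<in>carrier G. (\<lambda>x. g \<otimes> x \<otimes> inv g) ` Y)"
    using g g0 by blast
qed

lemma (in group) nclosure_incl:
  assumes "Y \<subseteq> carrier G"
  shows "Y \<subseteq> nclosure G Y"
proof
  fix y assume "y \<in> Y"
  then have "y \<in> (\<Union>g\<in>carrier G. (\<lambda>x. g \<otimes> x \<otimes> inv g) ` Y)"
    using assms by (auto intro!: bexI[of _ \<one>] image_eqI[of _ _ y])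
  then show "y \<in> nclosure G Y" unfolding nclosure_def by (rule generate.incl)
qed

lemma (in group) central_generate_normal:
  assumes z: "z \<in> carrier G" and central: "\<And>g. g \<in> carrier G \<Longrightarrow> z \<otimes> g = g \<otimes> z"
  shows "generate G {z} \<lhd> G"
proof (rule normal_generateI)
  fix h g assume "h \<in> {z}" "g \<in> carrier G"
  then show "g \<otimes> h \<otimes> inv g \<in> {z}"
    using z by (simp flip: central) (simp add: m_assoc)
qed (use z in auto)

lemma (in monoid) mprod_closed: "set xs \<subseteq> carrier G \<Longrightarrow> mprod G xs \<in> carrier G"
  by (induction xs) (auto simp: mprod_def)

lemma (in group_hom) hom_mprod:
  "set xs \<subseteq> carrier G \<Longrightarrow> h (mprod G xs) = mprod H (map h xs)"
  by (induction xs) (auto simp: mprod_def G.mprod_closed[unfolded mprod_def])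

lemma (in group_hom) hom_some_rcoset:
  assumes N: "subgroup N G" and kills: "\<And>k. k \<in> N \<Longrightarrow> h k = \<one>\<^bsub>H\<^esub>" and g: "g \<in> carrier G"
  shows "h (SOME x. x \<in> N #> g) = h g"
proof -
  have "(SOME x. x \<in> N #> g) \<in> N #> g"
    using G.rcos_self[OF g N] by (rule someI)
  then obtain k where "k \<in> N" "(SOME x. x \<in> N #> g) = k \<otimes> g"
    unfolding r_coset_def by blast
  then show ?thesis
    using kills subgroup.mem_carrier[OF N] g by simp
qed

lemma (in normal) group_hom_quotient: "group_hom G (G Mod H) ((#>) H)"
  by (simp add: group_hom_def group_hom_axioms_def factorgroup_is_group r_coset_hom_Mod is_group)

section \<open>Commutators\<close>

definition commutator :: "('a, 'b) monoid_scheme \<Rightarrow> 'a \<Rightarrow> 'a \<Rightarrow> 'a" where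
  "commutator G x y = x \<otimes>\<^bsub>G\<^esub> y \<otimes>\<^bsub>G\<^esub> inv\<^bsub>G\<^esub> x \<otimes>\<^bsub>G\<^esub> inv\<^bsub>G\<^esub> y"

lemma (in group_hom) hom_commutator [simp]:
  "x \<in> carrier G \<Longrightarrow> y \<in> carrier G \<Longrightarrow> h (commutator G x y) = commutator H (h x) (h y)"
  by (simp add: commutator_def)

context group
begin

lemma commutator_closed [simp]:
  "x \<in> carrier G \<Longrightarrow> y \<in> carrier G \<Longrightarrow> commutator G x y \<in> carrier G"
  by (simp add: commutator_def)

lemma commutator_one_left [simp]: "y \<in> carrier G \<Longrightarrow> commutator G \<one> y = \<one>"
  by (simp add: commutator_def)

lemma commutator_one_right [simp]: "x \<in> carrier G \<Longrightarrow> commutator G x \<one> = \<one>"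
  by (simp add: commutator_def)

lemma commutator_self [simp]: "x \<in> carrier G \<Longrightarrow> commutator G x x = \<one>"
  by (simp add: commutator_def m_assoc)

lemma inv_mult_cancel_left:
  "x \<in> carrier G \<Longrightarrow> y \<in> carrier G \<Longrightarrow> inv x \<otimes> (x \<otimes> y) = y"
  by (simp flip: m_assoc)

lemma mult_inv_cancel_left:
  "x \<in> carrier G \<Longrightarrow> y \<in> carrier G \<Longrightarrow> x \<otimes> (inv x \<otimes> y) = y"
  by (simp flip: m_assoc)

lemma mult_eq_commutator_mult_swap:
  assumes "x \<in> carrier G" "y \<in> carrier G"
  shows "x \<otimes> y = commutator G x y \<otimes> (y \<otimes> x)"
  using assms by (simp add: commutator_def m_assoc inv_mult_cancel_left)

lemma conj_eq_mult_commutator: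
  assumes "g \<in> carrier G" "u \<in> carrier G"
  shows "u \<otimes> g \<otimes> inv u = g \<otimes> commutator G (inv g) u"
  using assms by (simp add: commutator_def m_assoc mult_inv_cancel_left)

lemma commutator_in_derived:
  assumes "x \<in> carrier G" "y \<in> carrier G"
  shows "commutator G x y \<in> derived G (carrier G)"
  unfolding derived_def commutator_def using assms by (blast intro: generate.incl)

lemma generators_subset_carrier: "generate G A = carrier G \<Longrightarrow> A \<subseteq> carrier G"
  using generate.incl[of _ A G] by blast

lemma generate_commutes:
  assumes "c \<in> carrier G" "A \<subseteq> carrier G" "\<And>a. a \<in> A \<Longrightarrow> c \<otimes> a = a \<otimes> c"
    and "x \<in> generate G A"
  shows "c \<otimes> x = x \<otimes> c"
  using assms(4)
proof (induction rule: generate.induct)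
  case (inv h)
  then have h: "h \<in> carrier G" and ch: "c \<otimes> h = h \<otimes> c" using assms by auto
  have "c \<otimes> inv h = inv h \<otimes> (h \<otimes> c) \<otimes> inv h"
    using h assms(1) by (simp add: m_assoc inv_mult_cancel_left)
  also have "\<dots> = inv h \<otimes> c"
    using h assms(1) by (simp add: m_assoc flip: ch)
  finally show ?case .
next
  case (eng h1 h2)
  then have h1: "h1 \<in> carrier G" and h2: "h2 \<in> carrier G"
    using generate_in_carrier[OF assms(2)] by auto
  have "c \<otimes> (h1 \<otimes> h2) = h1 \<otimes> c \<otimes> h2"
    using h1 h2 assms(1) by (simp flip: m_assoc eng.IH(1))
  also have "\<dots> = h1 \<otimes> h2 \<otimes> c"
    using h1 h2 assms(1) by (simp add: m_assoc eng.IH(2))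
  finally show ?case .
qed (use assms in auto)

lemma comm_group_if_generators_commute:
  assumes gen: "generate G A = carrier G" and comm: "\<And>x y. x \<in> A \<Longrightarrow> y \<in> A \<Longrightarrow> x \<otimes> y = y \<otimes> x"
  shows "comm_group G"
proof (rule group_comm_groupI)
  have A: "A \<subseteq> carrier G" using generators_subset_carrier[OF gen] .
  have gen_comm: "a \<otimes> x = x \<otimes> a" if "a \<in> A" "x \<in> carrier G" for a x
    by (rule generate_commutes) (use that A comm gen in auto)
  fix x y assume x: "x \<in> carrier G" and y: "y \<in> carrier G"
  have "x \<otimes> a = a \<otimes> x" if "a \<in> A" for a
    using gen_comm[OF that x] by (rule sym)
  then show "x \<otimes> y = y \<otimes> x"
    using generate_commutes[OF x A] gen y by blast
qed

lemma commutator_in_normal_if_generators: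
  assumes N: "N \<lhd> G" and gen: "generate G A = carrier G"
    and comm: "\<And>x y. x \<in> A \<Longrightarrow> y \<in> A \<Longrightarrow> commutator G x y \<in> N"
    and x: "x \<in> carrier G" and y: "y \<in> carrier G"
  shows "commutator G x y \<in> N"
proof -
  let ?q = "(#>) N"
  interpret q: group_hom G "G Mod N" ?q
    using N by (rule normal.group_hom_quotient)
  have A: "A \<subseteq> carrier G" using generators_subset_carrier[OF gen] .
  have "comm_group (G Mod N)"
  proof (rule q.H.comm_group_if_generators_commute)
    show "generate (G Mod N) (?q ` A) = carrier (G Mod N)"
      using q.generate_img[OF A] gen by (simp add: carrier_FactGroup)
    fix u v assume "u \<in> ?q ` A" "v \<in> ?q ` A"
    then obtain x y where xy: "x \<in> A" "y \<in> A" and uv: "u = ?q x" "v = ?q y" by blast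
    then have x: "x \<in> carrier G" and y: "y \<in> carrier G" using A by auto
    have "?q (x \<otimes> y) = ?q (commutator G x y \<otimes> (y \<otimes> x))"
      using mult_eq_commutator_mult_swap[OF x y] by (rule arg_cong)
    also have "\<dots> = ?q (commutator G x y) \<otimes>\<^bsub>G Mod N\<^esub> ?q (y \<otimes> x)"
      using x y by (intro q.hom_mult) simp_all
    also have "?q (commutator G x y) = \<one>\<^bsub>G Mod N\<^esub>"
      using comm[OF xy] normal_imp_subgroup[OF N] by (simp add: subgroup.rcos_const group_axioms)
    also have "\<one>\<^bsub>G Mod N\<^esub> \<otimes>\<^bsub>G Mod N\<^esub> ?q (y \<otimes> x) = ?q (y \<otimes> x)"
      using x y by (intro q.H.l_one q.hom_closed) simp
    finally have "?q (x \<otimes> y) = ?q (y \<otimes> x)" .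
    then show "u \<otimes>\<^bsub>G Mod N\<^esub> v = v \<otimes>\<^bsub>G Mod N\<^esub> u"
      unfolding uv q.hom_mult[OF x y, symmetric] q.hom_mult[OF y x, symmetric] .
  qed
  then show ?thesis
    using derived_minimal[OF N] commutator_in_derived[OF x y] by blast
qed

end


section \<open>Families of surjective homomorphisms\<close>

locale surjective_hom_family = group G for G (structure) +
  fixes I :: "'i set" and \<Gamma> :: "'i \<Rightarrow> ('c, 'd) monoid_scheme" and \<pi> :: "'i \<Rightarrow> 'a \<Rightarrow> 'c"
  assumes group_factor: "i \<in> I \<Longrightarrow> group (\<Gamma> i)"
    and hom_factor: "i \<in> I \<Longrightarrow> \<pi> i \<in> hom G (\<Gamma> i)"
    and surj_factor: "i \<in> I \<Longrightarrow> \<pi> i ` carrier G = carrier (\<Gamma> i)"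
begin

lemma group_hom_factor: "i \<in> I \<Longrightarrow> group_hom G (\<Gamma> i) (\<pi> i)"
  by (simp add: group_hom_def group_hom_axioms_def group_axioms group_factor hom_factor)

lemma group_hom_product:
  assumes "J \<subseteq> I"
  shows "group_hom G (product_group J \<Gamma>) (\<lambda>g. \<lambda>i\<in>J. \<pi> i g)"
proof -
  have "(\<lambda>g. \<lambda>i\<in>J. \<pi> i g) \<in> hom G (product_group J \<Gamma>)"
  proof (rule homI)
    fix x y assume "x \<in> carrier G" "y \<in> carrier G"
    then show "(\<lambda>i\<in>J. \<pi> i (x \<otimes> y)) = (\<lambda>i\<in>J. \<pi> i x) \<otimes>\<^bsub>product_group J \<Gamma>\<^esub> (\<lambda>i\<in>J. \<pi> i y)"
      using assms hom_factor by (auto simp: hom_mult intro!: restrict_ext)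
  qed (use assms hom_factor in \<open>auto intro: hom_in_carrier\<close>)
  moreover have "group (product_group J \<Gamma>)"
    using assms group_factor by (intro product_group) blast
  ultimately show ?thesis
    by (simp add: group_hom_def group_hom_axioms_def group_axioms)
qed

lemma commutator_localized:
  assumes gen: "generate G A = carrier G" and i: "i \<in> I"
    and gens: "\<And>x y. x \<in> A \<Longrightarrow> y \<in> A \<Longrightarrow>
      \<pi> i (commutator G x y) = \<one>\<^bsub>\<Gamma> i\<^esub> \<or> (\<forall>r\<in>I - {i}. \<pi> r (commutator G x y) = \<one>\<^bsub>\<Gamma> r\<^esub>)"
    and x: "x \<in> carrier G" and y: "y \<in> carrier G"
  shows "\<exists>d\<in>carrier G. \<pi> i d = \<pi> i (commutator G x y) \<and> (\<forall>r\<in>I - {i}. \<pi> r d = \<one>\<^bsub>\<Gamma> r\<^esub>)"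
proof -
  interpret \<pi>i: group_hom G "\<Gamma> i" "\<pi> i" using group_hom_factor[OF i] .
  interpret \<rho>: group_hom G "product_group (I - {i}) \<Gamma>" "\<lambda>g. \<lambda>r\<in>I - {i}. \<pi> r g"
    using group_hom_product by blast
  define K where "K = kernel G (product_group (I - {i}) \<Gamma>) (\<lambda>g. \<lambda>r\<in>I - {i}. \<pi> r g)"
  have K_iff: "d \<in> K \<longleftrightarrow> d \<in> carrier G \<and> (\<forall>r\<in>I - {i}. \<pi> r d = \<one>\<^bsub>\<Gamma> r\<^esub>)" for d
    by (auto simp: K_def kernel_def fun_eq_iff)
  have M: "\<pi> i ` K \<lhd> \<Gamma> i"
    unfolding K_def using \<rho>.normal_kernel \<pi>i.group_hom_axioms surj_factor[OF i]
    by (rule normal.surj_hom_normal_subgroup)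
  have A: "A \<subseteq> carrier G" using generators_subset_carrier[OF gen] .
  have "commutator (\<Gamma> i) (\<pi> i x) (\<pi> i y) \<in> \<pi> i ` K"
  proof (rule \<pi>i.H.commutator_in_normal_if_generators[OF M])
    show "generate (\<Gamma> i) (\<pi> i ` A) = carrier (\<Gamma> i)"
      using \<pi>i.generate_img[OF A] gen surj_factor[OF i] by simp
    fix u v assume "u \<in> \<pi> i ` A" "v \<in> \<pi> i ` A"
    then obtain x' y' where x'y': "x' \<in> A" "y' \<in> A" "u = \<pi> i x'" "v = \<pi> i y'" by blast
    have x': "x' \<in> carrier G" and y': "y' \<in> carrier G" using x'y' A by auto
    then have closed: "commutator G x' y' \<in> carrier G" by simp
    from gens[OF x'y'(1,2)] have "\<pi> i (commutator G x' y') \<in> \<pi> i ` K"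
    proof
      assume "\<pi> i (commutator G x' y') = \<one>\<^bsub>\<Gamma> i\<^esub>"
      moreover have "\<one> \<in> K"
        using group_hom.hom_one[OF group_hom_factor] by (simp add: K_iff)
      ultimately show ?thesis by (metis \<pi>i.hom_one image_eqI)
    qed (use closed in \<open>auto simp: K_iff\<close>)
    then show "commutator (\<Gamma> i) u v \<in> \<pi> i ` K"
      using x' y' x'y'(3,4) by simp
  qed (use x y in auto)
  then obtain d where "d \<in> K" "\<pi> i d = \<pi> i (commutator G x y)"
    using x y by auto
  then show ?thesis
    using K_iff by blast
qed

end

locale localizable_commutators = surjective_hom_family +
  assumes finite_index: "finite I"
    and commutator_localizable: "\<And>i x y. i \<in> I \<Longrightarrow> x \<in> carrier G \<Longrightarrow> y \<in> carrier G \<Longrightarrow>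
      \<exists>d\<in>carrier G. \<pi> i d = \<pi> i (commutator G x y) \<and> (\<forall>r\<in>I - {i}. \<pi> r d = \<one>\<^bsub>\<Gamma> r\<^esub>)"
begin

lemma conjugation_componentwise:
  assumes "J \<subseteq> I" and g: "g \<in> carrier G" and x: "x \<in> carrier (product_group I \<Gamma>)"
  shows "\<exists>g'\<in>carrier G. \<forall>i\<in>I.
    \<pi> i g' = (if i \<in> J then x i \<otimes>\<^bsub>\<Gamma> i\<^esub> \<pi> i g \<otimes>\<^bsub>\<Gamma> i\<^esub> inv\<^bsub>\<Gamma> i\<^esub> x i else \<pi> i g)"
  using finite_subset[OF assms(1) finite_index] assms(1)
proof (induction J rule: finite_induct)
  case empty
  show ?case using g by auto
next
  case (insert j J)
  then obtain g' where g': "g' \<in> carrier G" and g'_eq: "\<forall>i\<in>I.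
    \<pi> i g' = (if i \<in> J then x i \<otimes>\<^bsub>\<Gamma> i\<^esub> \<pi> i g \<otimes>\<^bsub>\<Gamma> i\<^esub> inv\<^bsub>\<Gamma> i\<^esub> x i else \<pi> i g)" by auto
  have j: "j \<in> I" using insert.prems by simp
  interpret \<pi>j: group_hom G "\<Gamma> j" "\<pi> j" using group_hom_factor[OF j] .
  obtain u where u: "u \<in> carrier G" "\<pi> j u = x j"
    using x j surj_factor[OF j] by (metis PiE_mem carrier_product_group imageE)
  obtain d where d: "d \<in> carrier G" "\<pi> j d = \<pi> j (commutator G (inv g) u)"
    and d_trivial: "\<forall>r\<in>I - {j}. \<pi> r d = \<one>\<^bsub>\<Gamma> r\<^esub>"
    using commutator_localizable[OF j _ u(1), of "inv g"] g by auto
  have "\<pi> j (g' \<otimes> d) = \<pi> j (g \<otimes> commutator G (inv g) u)"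
    using g'_eq j insert.hyps(2) g g' u d by simp
  also have "\<dots> = x j \<otimes>\<^bsub>\<Gamma> j\<^esub> \<pi> j g \<otimes>\<^bsub>\<Gamma> j\<^esub> inv\<^bsub>\<Gamma> j\<^esub> x j"
    using g u by (simp flip: conj_eq_mult_commutator)
  finally have at_j: "\<pi> j (g' \<otimes> d) = x j \<otimes>\<^bsub>\<Gamma> j\<^esub> \<pi> j g \<otimes>\<^bsub>\<Gamma> j\<^esub> inv\<^bsub>\<Gamma> j\<^esub> x j" .
  have elsewhere: "\<pi> i (g' \<otimes> d) = \<pi> i g'" if "i \<in> I - {j}" for i
  proof -
    interpret \<pi>i: group_hom G "\<Gamma> i" "\<pi> i" using group_hom_factor that by blast
    show ?thesis using d_trivial that g' d by simp
  qed
  show ?case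
  proof (intro bexI ballI)
    fix i assume "i \<in> I"
    then show "\<pi> i (g' \<otimes> d) = (if i \<in> insert j J
        then x i \<otimes>\<^bsub>\<Gamma> i\<^esub> \<pi> i g \<otimes>\<^bsub>\<Gamma> i\<^esub> inv\<^bsub>\<Gamma> i\<^esub> x i else \<pi> i g)"
      using at_j elsewhere g'_eq insert.hyps(2) by (cases "i = j") auto
  qed (use g' d in simp)
qed

lemma image_normal: "(\<lambda>g. \<lambda>i\<in>I. \<pi> i g) ` carrier G \<lhd> product_group I \<Gamma>"
proof -
  interpret \<rho>: group_hom G "product_group I \<Gamma>" "\<lambda>g. \<lambda>i\<in>I. \<pi> i g"
    using group_hom_product by blast
  show ?thesis
  proof (rule \<rho>.H.normal_invI[OF \<rho>.img_is_subgroup])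
    fix x h assume x: "x \<in> carrier (product_group I \<Gamma>)" and "h \<in> (\<lambda>g. \<lambda>i\<in>I. \<pi> i g) ` carrier G"
    then obtain g where g: "g \<in> carrier G" "h = (\<lambda>i\<in>I. \<pi> i g)" by blast
    obtain g' where g': "g' \<in> carrier G"
      and g'_eq: "\<forall>i\<in>I. \<pi> i g' = x i \<otimes>\<^bsub>\<Gamma> i\<^esub> \<pi> i g \<otimes>\<^bsub>\<Gamma> i\<^esub> inv\<^bsub>\<Gamma> i\<^esub> x i"
      using conjugation_componentwise[OF order_refl g(1) x] by auto
    have "x \<otimes>\<^bsub>product_group I \<Gamma>\<^esub> h \<otimes>\<^bsub>product_group I \<Gamma>\<^esub> inv\<^bsub>product_group I \<Gamma>\<^esub> x
        = (\<lambda>i\<in>I. \<pi> i g')"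
      using x g'_eq group_factor by (auto simp: g(2) intro!: restrict_ext)
    then show "x \<otimes>\<^bsub>product_group I \<Gamma>\<^esub> h \<otimes>\<^bsub>product_group I \<Gamma>\<^esub> inv\<^bsub>product_group I \<Gamma>\<^esub> x
        \<in> (\<lambda>g. \<lambda>i\<in>I. \<pi> i g) ` carrier G"
      using g' by blast
  qed
qed

end

section \<open>The quotients \<open>G\<^sub>S/\<langle>z\<^sub>S\<rangle>\<close>\<close>

locale central_product_generators = group G for G (structure) +
  fixes a :: "nat \<Rightarrow> 'a" and n :: nat
  assumes generators_closed: "a ` {1..n} \<subseteq> carrier G"
    and product_central: "g \<in> carrier G \<Longrightarrow> zG G a n \<otimes> g = g \<otimes> zG G a n"
begin

lemma zG_closed: "zG G a n \<in> carrier G"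
  unfolding zG_def using generators_closed by (intro mprod_closed) auto

lemma NS_normal: "NS G a n S \<lhd> G"
  unfolding NS_def using generators_closed by (intro nclosure_normal) auto

lemma generator_in_NS:
  assumes "j \<in> {1..n}" "j \<notin> S"
  shows "a j \<in> NS G a n S"
proof -
  have "a ` ({1..n} - S) \<subseteq> carrier G" using generators_closed by auto
  then show ?thesis unfolding NS_def using nclosure_incl assms by blast
qed

lemma projS_eq: "projS G a n S = (#>) (NS G a n S)"
  by (simp add: fun_eq_iff projS_def)

lemma group_hom_projS: "group_hom G (GS G a n S) (projS G a n S)"
  unfolding projS_eq GS_def using NS_normal by (rule normal.group_hom_quotient)

lemma projS_surj: "projS G a n S ` carrier G = carrier (GS G a n S)"
  by (simp add: projS_eq GS_def carrier_FactGroup)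

lemma zS_eq: "zS G a n S = projS G a n S (zG G a n)"
proof -
  interpret \<pi>: group_hom G "GS G a n S" "projS G a n S" by (rule group_hom_projS)
  show ?thesis
    unfolding zS_def zG_def using generators_closed by (subst \<pi>.hom_mprod) (auto simp: o_def)
qed

lemma zS_generate_normal: "generate (GS G a n S) {zS G a n S} \<lhd> GS G a n S"
proof -
  interpret \<pi>: group_hom G "GS G a n S" "projS G a n S" by (rule group_hom_projS)
  show ?thesis
  proof (rule \<pi>.H.central_generate_normal)
    show "zS G a n S \<in> carrier (GS G a n S)" by (simp add: zS_eq zG_closed)
    fix h assume "h \<in> carrier (GS G a n S)"
    then obtain g where g: "g \<in> carrier G" "h = projS G a n S g"
      using projS_surj by blast
    then show "zS G a n S \<otimes>\<^bsub>GS G a n S\<^esub> h = h \<otimes>\<^bsub>GS G a n S\<^esub> zS G a n S"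
      using zG_closed product_central by (simp add: zS_eq flip: \<pi>.hom_mult)
  qed
qed

lemma group_hom_quotient_zS:
  "group_hom (GS G a n S) (GbarS G a n S) ((#>\<^bsub>GS G a n S\<^esub>) (generate (GS G a n S) {zS G a n S}))"
  unfolding GbarS_def using zS_generate_normal by (rule normal.group_hom_quotient)

lemma projbarS_eq:
  "projbarS G a n S = (#>\<^bsub>GS G a n S\<^esub>) (generate (GS G a n S) {zS G a n S}) \<circ> projS G a n S"
  by (simp add: fun_eq_iff projbarS_def)

lemma group_hom_projbarS: "group_hom G (GbarS G a n S) (projbarS G a n S)"
proof -
  interpret \<pi>: group_hom G "GS G a n S" "projS G a n S" by (rule group_hom_projS)
  interpret q: group_hom "GS G a n S" "GbarS G a n S"
      "(#>\<^bsub>GS G a n S\<^esub>) (generate (GS G a n S) {zS G a n S})"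
    by (rule group_hom_quotient_zS)
  show ?thesis
    unfolding projbarS_eq group_hom_def group_hom_axioms_def
    using Group.hom_compose[OF \<pi>.homh q.homh] by (simp add: group_axioms q.H.group_axioms)
qed

lemma projbarS_surj: "projbarS G a n S ` carrier G = carrier (GbarS G a n S)"
  unfolding projbarS_eq image_comp[symmetric] projS_surj by (simp add: GbarS_def carrier_FactGroup)

lemma projbarS_zG: "projbarS G a n S (zG G a n) = \<one>\<^bsub>GbarS G a n S\<^esub>"
proof -
  interpret \<pi>: group_hom G "GS G a n S" "projS G a n S" by (rule group_hom_projS)
  have "subgroup (generate (GS G a n S) {zS G a n S}) (GS G a n S)"
    by (intro \<pi>.H.generate_is_subgroup) (simp add: zS_eq zG_closed)
  then show ?thesis
    by (simp add: projbarS_def GbarS_def flip: zS_eq)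
      (simp add: subgroup.rcos_const \<pi>.H.group_axioms generate.incl)
qed

lemma projbarS_generator:
  assumes j: "j \<in> {1..n}" "j \<notin> S"
  shows "projbarS G a n S (a j) = \<one>\<^bsub>GbarS G a n S\<^esub>"
proof -
  interpret \<pi>: group_hom G "GS G a n S" "projS G a n S" by (rule group_hom_projS)
  interpret q: group_hom "GS G a n S" "GbarS G a n S"
      "(#>\<^bsub>GS G a n S\<^esub>) (generate (GS G a n S) {zS G a n S})"
    by (rule group_hom_quotient_zS)
  have "projS G a n S (a j) = \<one>\<^bsub>GS G a n S\<^esub>"
    using generator_in_NS[OF j] NS_normal
    by (simp add: projS_eq GS_def normal_imp_subgroup subgroup.rcos_const group_axioms)
  then show ?thesis by (simp add: projbarS_eq)
qed

lemma projbarS_some_rcoset: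
  assumes g: "g \<in> carrier G"
  shows "projbarS G a n S (SOME x. x \<in> generate G {zG G a n} #> g) = projbarS G a n S g"
proof -
  interpret \<pi>: group_hom G "GbarS G a n S" "projbarS G a n S" by (rule group_hom_projbarS)
  have "generate G {zG G a n} \<subseteq> kernel G (GbarS G a n S) (projbarS G a n S)"
    using zG_closed projbarS_zG
    by (intro generate_subgroup_incl \<pi>.subgroup_kernel) (auto simp: kernel_def)
  then show ?thesis
    using zG_closed g by (intro \<pi>.hom_some_rcoset generate_is_subgroup) (auto simp: kernel_def)
qed

lemma rhobar_image:
  "rhobar G a n Ss m ` carrier (Gbar G a n) = (\<lambda>g. \<lambda>i\<in>{1..m}. projbarS G a n (Ss i) g) ` carrier G"
  unfolding Gbar_def carrier_FactGroup image_image
  by (rule image_cong) (simp_all add: rhobar_def projbarS_some_rcoset)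

lemma generator_commutator_localized:
  assumes i: "i \<in> {1..m}" and supports: "\<And>r. r \<in> {1..m} \<Longrightarrow> Ss r \<subseteq> {1..n}"
    and overlap: "\<And>r. r \<in> {1..m} \<Longrightarrow> r \<noteq> i \<Longrightarrow> card (Ss i \<inter> Ss r) \<le> 1"
    and x: "x \<in> a ` {1..n}" and y: "y \<in> a ` {1..n}"
  shows "projbarS G a n (Ss i) (commutator G x y) = \<one>\<^bsub>GbarS G a n (Ss i)\<^esub> \<or>
    (\<forall>r\<in>{1..m} - {i}. projbarS G a n (Ss r) (commutator G x y) = \<one>\<^bsub>GbarS G a n (Ss r)\<^esub>)"
proof -
  obtain j k where jk: "j \<in> {1..n}" "k \<in> {1..n}" "x = a j" "y = a k" using x y by blast
  have xy: "x \<in> carrier G" "y \<in> carrier G" using x y generators_closed by auto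
  have trivial: "projbarS G a n S (commutator G x y) = \<one>\<^bsub>GbarS G a n S\<^esub>"
    if "j \<notin> S \<or> k \<notin> S \<or> j = k" for S
  proof -
    interpret \<pi>: group_hom G "GbarS G a n S" "projbarS G a n S" by (rule group_hom_projbarS)
    show ?thesis using that jk xy projbarS_generator by auto
  qed
  show ?thesis
  proof (rule disjCI)
    assume "\<not> (\<forall>r\<in>{1..m} - {i}. projbarS G a n (Ss r) (commutator G x y) = \<one>\<^bsub>GbarS G a n (Ss r)\<^esub>)"
    then obtain r where r: "r \<in> {1..m}" "r \<noteq> i" and "j \<in> Ss r" "k \<in> Ss r" "j \<noteq> k"
      using trivial by blast
    moreover have "finite (Ss i \<inter> Ss r)"
      using supports[OF i] by (meson finite_Int finite_atLeastAtMost finite_subset)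
    ultimately have "\<not> (j \<in> Ss i \<and> k \<in> Ss i)"
      using overlap[OF r] card_mono[of "Ss i \<inter> Ss r" "{j, k}"] by auto
    then show "projbarS G a n (Ss i) (commutator G x y) = \<one>\<^bsub>GbarS G a n (Ss i)\<^esub>"
      using trivial by blast
  qed
qed

end

theorem mainTheorem12:
  fixes G :: "('a, 'b) monoid_scheme"
    and a :: "nat \<Rightarrow> 'a" and n m :: nat and Ss :: "nat \<Rightarrow> nat set"
  assumes "group G"
    and "a ` {1..n} \<subseteq> carrier G"
    and "generate G (a ` {1..n}) = carrier G"
    and "\<forall>g\<in>carrier G. zG G a n \<otimes>\<^bsub>G\<^esub> g = g \<otimes>\<^bsub>G\<^esub> zG G a n"
    and "\<forall>i\<in>{1..m}. Ss i \<subseteq> {1..n}"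
    and "\<forall>i\<in>{1..m}. \<forall>r\<in>{1..m}. i \<noteq> r \<longrightarrow> card (Ss i \<inter> Ss r) \<le> 1"
    and "\<forall>i\<in>{1..m}. \<forall>k\<in>Ss i.
           free_basis (GbarS G a n (Ss i)) (Ss i - {k}) (\<lambda>j. projbarS G a n (Ss i) (a j))"
  shows "rhobar G a n Ss m ` carrier (Gbar G a n) \<lhd> Abar G a n Ss m"
proof -
  interpret central_product_generators G a n
    using assms(1,2,4) by (simp add: central_product_generators_def central_product_generators_axioms_def)
  have family: "surjective_hom_family G {1..m} (\<lambda>i. GbarS G a n (Ss i)) (\<lambda>i. projbarS G a n (Ss i))"
    using group_hom_projbarS projbarS_surj group_axioms
    by (intro surjective_hom_family.intro surjective_hom_family_axioms.intro)
      (auto simp: group_hom_def group_hom_axioms_def)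
  interpret localizable_commutators G "{1..m}" "\<lambda>i. GbarS G a n (Ss i)" "\<lambda>i. projbarS G a n (Ss i)"
  proof (intro localizable_commutators.intro[OF family] localizable_commutators_axioms.intro)
    fix i x y assume "i \<in> {1..m}" "x \<in> carrier G" "y \<in> carrier G"
    then show "\<exists>d\<in>carrier G. projbarS G a n (Ss i) d = projbarS G a n (Ss i) (commutator G x y) \<and>
        (\<forall>r\<in>{1..m} - {i}. projbarS G a n (Ss r) d = \<one>\<^bsub>GbarS G a n (Ss r)\<^esub>)"
      using assms(5,6)
      by (intro surjective_hom_family.commutator_localized[OF family assms(3)]
          generator_commutator_localized) auto
  qed simp
  show ?thesis
    using image_normal by (simp add: rhobar_image Abar_def)
qed

end
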